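(* There is an absolute constant $C$ such that, in the construction below, $\hat{\mathcal D}$ is $(C\log n)$-Lipschitz with respect to $(X,d)$: for every $m\ge1$ and every sequence $x_1,\dots,x_m\in X$ there are root-to-level-$K$ paths $\gamma_1,\dots,\gamma_m$ in $\mathcal D$, with $\gamma_i$ ending at $(x_i,K)$, such that $\sum_{i=1}^{m-1}\mathrm{dist}_{\hat{\mathcal D}}(\gamma_i,\gamma_{i+1})\le C\log(n)\sum_{i=1}^{m-1}d(x_i,x_{i+1})$.
   Context: Construction. Let $(X,d)$ be a metric space with $n=|X|\ge2$ and $\mathrm{diam}(X)=1$. For $S\subseteq X$, $r\ge0$: $B_X(S,r):=\{x\in X:\exists s\in S,\ d(x,s)\le r\}$ and $B_X(x,r):=B_X(\{x\},r)$. Let $\varepsilon_0:=\min\{d(x,y):x\ne y\}$, $\tau:=12$, $K:=1+\lceil\log_\tau(1/\varepsilon_0)\rceil$. For $\eta>0$ the greedy $\eta$-net is built as: $N_0=\emptyset$; for $j\ge1$, $S_j:=X\setminus B_X(N_{j-1},\eta)$; if $S_j=\emptyset$ output $N_{j-1}$; else pick $x_j\in S_j$ maximizing $|B_X(x,\eta/3)|$ and set $N_j=N_{j-1}\cup\{x_j\}$. For $k=0,\dots,K$ let $U_k$ be the greedy $\tau^{-k}$-net. For $k<K$, $A_k$ is the set of pairs $(u,u')\in U_k\times U_{k+1}$ with (i) $d(u,u')\le4\tau^{-k}$ and (ii) $|B_X(u,\tau^{-k}/3)|\ge\max\{|B_X(w,\tau^{-k}/3)|:w\in B_X(u',6\tau^{-(k+1)})\}$.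 The directed graph $\mathcal D$ has vertex set $\{(u,k):u\in U_k,\ 0\le k\le K\}$, arcs $((u,k),(u',k+1))$ for $(u,u')\in A_k$, root $(u,0)$ with $U_0=\{u\}$, with weights $\omega_{(u,k)(u',k+1)}:=10\tau^{-k}$. For two root-to-level-$K$ paths $\gamma_1\ne\gamma_2$, let $a$ be the first vertex at which they diverge, with arcs $av_1\in\gamma_1$, $av_2\in\gamma_2$, $v_1\ne v_2$; $\mathrm{dist}_{\hat{\mathcal D}}(\gamma_1,\gamma_2):=\max(\omega_{av_1},\omega_{av_2})$, and $\mathrm{dist}_{\hat{\mathcal D}}(\gamma,\gamma):=0$. *)

theory Defs
  imports Complex_Main
begin

definition fin_metric :: "'a set \<Rightarrow> ('a \<Rightarrow> 'a \<Rightarrow> real) \<Rightarrow> bool" where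
  "fin_metric X d \<longleftrightarrow> finite X \<and>
     (\<forall>x\<in>X. d x x = 0) \<and>
     (\<forall>x\<in>X. \<forall>y\<in>X. x \<noteq> y \<longrightarrow> d x y > 0) \<and>
     (\<forall>x\<in>X. \<forall>y\<in>X. d x y = d y x) \<and>
     (\<forall>x\<in>X. \<forall>y\<in>X. \<forall>z\<in>X. d x z \<le> d x y + d y z)"

definition diam :: "'a set \<Rightarrow> ('a \<Rightarrow> 'a \<Rightarrow> real) \<Rightarrow> real" where
  "diam X d = Max ((\<lambda>(x, y). d x y) ` (X \<times> X))"

definition ballS :: "'a set \<Rightarrow> ('a \<Rightarrow> 'a \<Rightarrow> real) \<Rightarrow> 'a set \<Rightarrow> real \<Rightarrow> 'a set" where
  "ballS X d S r = {x \<in> X. \<exists>s\<in>S. d x s \<le> r}"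

definition ball1 :: "'a set \<Rightarrow> ('a \<Rightarrow> 'a \<Rightarrow> real) \<Rightarrow> 'a \<Rightarrow> real \<Rightarrow> 'a set" where
  "ball1 X d x r = ballS X d {x} r"

definition eps0 :: "'a set \<Rightarrow> ('a \<Rightarrow> 'a \<Rightarrow> real) \<Rightarrow> real" where
  "eps0 X d = Min {d x y | x y. x \<in> X \<and> y \<in> X \<and> x \<noteq> y}"

definition tau :: real where "tau = 12"

definition Klev :: "'a set \<Rightarrow> ('a \<Rightarrow> 'a \<Rightarrow> real) \<Rightarrow> nat" where
  "Klev X d = 1 + nat \<lceil>log tau (1 / eps0 X d)\<rceil>"

text \<open>A run of the greedy eta-net procedure: the list of chosen points x_1, x_2, ...
  (list index j corresponds to step j+1, N_{j} = set (take j xs)). Ties in the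
  maximisation are broken arbitrarily: every admissible run is allowed.\<close>
definition greedy_run :: "'a set \<Rightarrow> ('a \<Rightarrow> 'a \<Rightarrow> real) \<Rightarrow> real \<Rightarrow> 'a list \<Rightarrow> bool" where
  "greedy_run X d eta xs \<longleftrightarrow>
     (\<forall>j < length xs.
        let S = X - ballS X d (set (take j xs)) eta in
        xs ! j \<in> S \<and>
        (\<forall>y\<in>S. card (ball1 X d y (eta / 3)) \<le> card (ball1 X d (xs ! j) (eta / 3))))
     \<and> X - ballS X d (set xs) eta = {}"

definition greedy_net :: "'a set \<Rightarrow> ('a \<Rightarrow> 'a \<Rightarrow> real) \<Rightarrow> real \<Rightarrow> 'a set \<Rightarrow> bool" where
  "greedy_net X d eta N \<longleftrightarrow> (\<exists>xs. greedy_run X d eta xs \<and> N = set xs)"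

definition nets_ok :: "'a set \<Rightarrow> ('a \<Rightarrow> 'a \<Rightarrow> real) \<Rightarrow> (nat \<Rightarrow> 'a set) \<Rightarrow> bool" where
  "nets_ok X d U \<longleftrightarrow> (\<forall>k \<le> Klev X d. greedy_net X d (1 / tau ^ k) (U k))"

definition arcA :: "'a set \<Rightarrow> ('a \<Rightarrow> 'a \<Rightarrow> real) \<Rightarrow> (nat \<Rightarrow> 'a set) \<Rightarrow> nat \<Rightarrow> 'a \<Rightarrow> 'a \<Rightarrow> bool" where
  "arcA X d U k u u' \<longleftrightarrow> u \<in> U k \<and> u' \<in> U (Suc k) \<and>
     d u u' \<le> 4 / tau ^ k \<and>
     (\<forall>w \<in> ball1 X d u' (6 / tau ^ (Suc k)).
        card (ball1 X d w (1 / tau ^ k / 3)) \<le> card (ball1 X d u (1 / tau ^ k / 3)))"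

definition arc_weight :: "nat \<Rightarrow> real" where
  "arc_weight k = 10 / tau ^ k"

text \<open>A root-to-level-K path in D, represented by the list of its points
  (the vertex at position k is (p ! k, k)).\<close>
definition dpath :: "'a set \<Rightarrow> ('a \<Rightarrow> 'a \<Rightarrow> real) \<Rightarrow> (nat \<Rightarrow> 'a set) \<Rightarrow> 'a list \<Rightarrow> bool" where
  "dpath X d U p \<longleftrightarrow> length p = Suc (Klev X d) \<and> p ! 0 \<in> U 0 \<and>
     (\<forall>k < Klev X d. arcA X d U k (p ! k) (p ! Suc k))"

definition dist_hat :: "'a list \<Rightarrow> 'a list \<Rightarrow> real" where
  "dist_hat p q = (if p = q then 0 else
     (let j = (LEAST j. p ! Suc j \<noteq> q ! Suc j) in max (arc_weight j) (arc_weight j)))"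

end

theory Submission
  imports Defs
begin

text \<open>At every scale \<open>k\<close> cut the sequence \<open>x\<^sub>1, \<dots>, x\<^sub>m\<close> into blocks: a new block
  starts at \<open>x\<^sub>i\<^sub>+\<^sub>1\<close> when it is farther than \<open>\<tau>\<^sup>-\<^sup>k/2\<close> from the first point of the
  current block. At level \<open>k\<close> the path \<open>\<gamma>\<^sub>i\<close> passes through a net point near the first point of
  the block of \<open>x\<^sub>i\<close> whose ball count dominates a neighbourhood of that point; this choice makes
  consecutive levels satisfy the arc conditions. Then \<open>\<gamma>\<^sub>i\<close> and \<open>\<gamma>\<^sub>i\<^sub>+\<^sub>1\<close> agree below the first
  level \<open>k\<close> at which \<open>x\<^sub>i\<^sub>+\<^sub>1\<close> starts a new block, so their distance is \<open>O(\<tau>\<^sup>-\<^sup>k)\<close>.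

  A new block at level \<open>k\<close> means that the walk since the start of the block has displacement
  more than \<open>\<tau>\<^sup>-\<^sup>k/2\<close>. Steps shorter than \<open>\<tau>\<^sup>-\<^sup>k/(4n)\<close> contribute at most \<open>\<tau>\<^sup>-\<^sup>k/4\<close> to it,
  as the walk visits at most \<open>n\<close> distinct points, so the cost of the new block is paid by the
  longer steps, each capped at \<open>\<tau>\<^sup>-\<^sup>k\<close>. A step of length \<open>\<delta>\<close> is thus charged at the levels with
  \<open>\<tau>\<^sup>-\<^sup>k \<le> 4n\<delta>\<close>: those with \<open>\<tau>\<^sup>-\<^sup>k \<le> \<delta>\<close> form a geometric sum \<open>O(\<delta>)\<close>, and only
  \<open>O(log n)\<close> levels satisfy \<open>\<delta> < \<tau>\<^sup>-\<^sup>k \<le> 4n\<delta>\<close>.\<close>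

section \<open>Finite metric spaces\<close>

lemma last_visit:
  fixes y :: "nat \<Rightarrow> 'b"
  assumes "a \<le> b"
  obtains s where "a \<le> s" "s \<le> b" "y s = y a" "card (y ` {Suc s..b}) < card (y ` {a..b})"
proof -
  define Q where "Q = {t\<in>{a..b}. y t = y a}"
  define s where "s = Max Q"
  have "finite Q" "a \<in> Q" using assms unfolding Q_def by auto
  hence s_max: "s \<in> Q" "\<forall>t\<in>Q. t \<le> s" unfolding s_def by (auto intro: Max_in)
  hence s: "a \<le> s" "s \<le> b" "y s = y a" unfolding Q_def by auto
  have "y t \<noteq> y a" if "t \<in> {Suc s..b}" for t
  proof
    assume "y t = y a"
    hence "t \<in> Q" using that s(1) unfolding Q_def by simp
    thus False using s_max(2) that by fastforce
  qed
  hence "y ` {Suc s..b} \<subseteq> y ` {a..b} - {y a}" using s(1) by auto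
  hence "card (y ` {Suc s..b}) \<le> card (y ` {a..b} - {y a})" by (intro card_mono) auto
  also have "\<dots> < card (y ` {a..b})" using assms by (intro card_Diff1_less) auto
  finally show ?thesis using that s by blast
qed

definition step_charge :: "real \<Rightarrow> real \<Rightarrow> real \<Rightarrow> real" where
  "step_charge \<eta> N \<delta> = (if \<eta> / (4 * N) \<le> \<delta> then min \<delta> \<eta> else 0)"

lemma step_charge_nonneg: "\<eta> \<ge> 0 \<Longrightarrow> N > 0 \<Longrightarrow> step_charge \<eta> N \<delta> \<ge> 0"
  unfolding step_charge_def by (auto intro: order_trans[rotated])

locale finite_metric =
  fixes X :: "'a set" and d :: "'a \<Rightarrow> 'a \<Rightarrow> real"
  assumes fin_metric: "fin_metric X d"
begin

lemma finite_X: "finite X"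
  using fin_metric by (simp add: fin_metric_def)

lemma d_self: "x \<in> X \<Longrightarrow> d x x = 0"
  using fin_metric by (simp add: fin_metric_def)

lemma d_pos: "x \<in> X \<Longrightarrow> y \<in> X \<Longrightarrow> x \<noteq> y \<Longrightarrow> d x y > 0"
  using fin_metric by (simp add: fin_metric_def)

lemma d_sym: "x \<in> X \<Longrightarrow> y \<in> X \<Longrightarrow> d x y = d y x"
  using fin_metric by (simp add: fin_metric_def)

lemma d_triangle: "x \<in> X \<Longrightarrow> y \<in> X \<Longrightarrow> z \<in> X \<Longrightarrow> d x z \<le> d x y + d y z"
  using fin_metric unfolding fin_metric_def by blast

lemma d_nonneg: "x \<in> X \<Longrightarrow> y \<in> X \<Longrightarrow> d x y \<ge> 0"
  using d_triangle[of x y x] d_self[of x] d_sym[of x y] by simp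

lemma dist_le_long_steps:
  assumes "\<theta> \<ge> 0" "a \<le> b" "\<forall>t\<in>{a..b}. y t \<in> X"
  shows "d (y a) (y b) \<le>
           (\<Sum>t\<in>{a..<b}. if \<theta> \<le> d (y t) (y (Suc t)) then d (y t) (y (Suc t)) else 0)
           + (real (card (y ` {a..b})) - 1) * \<theta>"
  using assms(2,3)
proof (induction "b - a" arbitrary: a rule: less_induct)
  case less
  let ?long = "\<lambda>t. if \<theta> \<le> d (y t) (y (Suc t)) then d (y t) (y (Suc t)) else 0"
  have long_nonneg: "?long t \<ge> 0" if "t \<in> {a..<b}" for t
    using less.prems that d_nonneg by auto
  have card_pos: "card (y ` {a..b}) \<ge> 1"
    using less.prems by (simp add: Suc_le_eq card_gt_0_iff)
  obtain s where s: "a \<le> s" "s \<le> b" "y s = y a" "card (y ` {Suc s..b}) < card (y ` {a..b})"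
    using last_visit[OF less.prems(1)] .
  show ?case
  proof (cases "s = b")
    case True
    hence "d (y a) (y b) = 0" using s less.prems d_self by auto
    moreover have "0 \<le> (\<Sum>t\<in>{a..<b}. ?long t)" using long_nonneg by (intro sum_nonneg) auto
    ultimately show ?thesis using card_pos assms(1) by simp
  next
    case False
    \<comment> \<open>Jumping past the last visit of \<open>y a\<close> loses a distinct point and costs one step,
      which is either long or at most \<open>\<theta>\<close>.\<close>
    have IH: "d (y (Suc s)) (y b) \<le> (\<Sum>t\<in>{Suc s..<b}. ?long t)
                + (real (card (y ` {Suc s..b})) - 1) * \<theta>"
      using False s less.prems by (intro less.hyps) auto
    have "real (card (y ` {Suc s..b}) + 1) \<le> real (card (y ` {a..b}))"
      using s(4) by (intro of_nat_mono) simp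
    hence card_drop: "real (card (y ` {Suc s..b})) \<le> real (card (y ` {a..b})) - 1" by simp
    have yX: "y s \<in> X" "y (Suc s) \<in> X" "y b \<in> X" using less.prems s False by auto
    have first_step: "d (y s) (y (Suc s)) \<le> ?long s + \<theta>" using assms(1) d_nonneg[OF yX(1,2)] by auto
    have "?long s + (\<Sum>t\<in>{Suc s..<b}. ?long t) = (\<Sum>t\<in>insert s {Suc s..<b}. ?long t)"
      by simp
    also have "\<dots> \<le> (\<Sum>t\<in>{a..<b}. ?long t)"
      using long_nonneg s False by (intro sum_mono2) auto
    finally have long_split: "?long s + (\<Sum>t\<in>{Suc s..<b}. ?long t) \<le> (\<Sum>t\<in>{a..<b}. ?long t)" .
    have "d (y a) (y b) \<le> d (y s) (y (Suc s)) + d (y (Suc s)) (y b)"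
      using d_triangle[OF yX] s by simp
    moreover have "(real (card (y ` {Suc s..b})) - 1) * \<theta> \<le> (real (card (y ` {a..b})) - 2) * \<theta>"
      using card_drop assms(1) by (intro mult_right_mono) auto
    ultimately show ?thesis using IH first_step long_split by (simp add: algebra_simps)
  qed
qed

lemma displacement_le_step_charges:
  assumes "\<eta> > 0" "a \<le> b" "\<forall>t\<in>{a..b}. y t \<in> X" "\<eta> / 2 < d (y a) (y b)"
  shows "\<eta> \<le> 4 * (\<Sum>t\<in>{a..<b}. step_charge \<eta> (card X) (d (y t) (y (Suc t))))"
proof -
  let ?N = "real (card X)"
  let ?\<theta> = "\<eta> / (4 * ?N)"
  let ?long = "\<lambda>t. if ?\<theta> \<le> d (y t) (y (Suc t)) then d (y t) (y (Suc t)) else 0"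
  let ?charge = "\<lambda>t. step_charge \<eta> ?N (d (y t) (y (Suc t)))"
  have "y a \<in> X" using assms(2,3) by simp
  hence N_pos: "?N > 0" using finite_X by (auto simp: card_gt_0_iff)
  have "card (y ` {a..b}) \<le> card X" using assms(3) finite_X by (intro card_mono) auto
  hence "(real (card (y ` {a..b})) - 1) * ?\<theta> \<le> ?N * ?\<theta>"
    using assms(1) N_pos by (intro mult_right_mono) auto
  also have "?N * ?\<theta> = \<eta> / 4" using N_pos by simp
  finally have "(real (card (y ` {a..b})) - 1) * ?\<theta> \<le> \<eta> / 4" .
  moreover have "d (y a) (y b) \<le> (\<Sum>t\<in>{a..<b}. ?long t) + (real (card (y ` {a..b})) - 1) * ?\<theta>"
    by (rule dist_le_long_steps) (use assms N_pos in auto)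
  ultimately have "\<eta> / 4 < (\<Sum>t\<in>{a..<b}. ?long t)" using assms(4) by linarith
  show ?thesis
  proof (cases "\<exists>t\<in>{a..<b}. ?\<theta> \<le> d (y t) (y (Suc t)) \<and> \<eta> \<le> d (y t) (y (Suc t))")
    case True
    then obtain t where t: "t \<in> {a..<b}" "?charge t = \<eta>" unfolding step_charge_def by auto
    have "?charge t \<le> (\<Sum>t\<in>{a..<b}. ?charge t)"
      using t(1) step_charge_nonneg assms(1) N_pos by (intro member_le_sum) auto
    thus ?thesis using t(2) assms(1) by linarith
  next
    case False
    hence "(\<Sum>t\<in>{a..<b}. ?charge t) = (\<Sum>t\<in>{a..<b}. ?long t)"
      unfolding step_charge_def by (intro sum.cong) auto
    thus ?thesis using \<open>\<eta> / 4 < (\<Sum>t\<in>{a..<b}. ?long t)\<close> by linarith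
  qed
qed

end

section \<open>The scales \<open>\<tau>\<^sup>-\<^sup>k\<close>\<close>

definition eta :: "nat \<Rightarrow> real" where "eta k = 1 / tau ^ k"

lemma eta_eq_power: "eta k = (1/12) ^ k"
  by (simp add: eta_def tau_def power_one_over)

lemma eta_pos: "eta k > 0"
  by (simp add: eta_def tau_def)

lemma eta_Suc: "eta (Suc k) = eta k / 12"
  by (simp add: eta_def tau_def)

lemma eta_add: "eta (j + l) = eta j / 12 ^ l"
  by (simp add: eta_def tau_def power_add)

lemma eta_antimono: "j \<le> k \<Longrightarrow> eta k \<le> eta j"
  unfolding eta_eq_power by (rule power_decreasing) auto

lemma arc_weight_eq: "arc_weight k = 10 * eta k"
  by (simp add: arc_weight_def eta_def)

lemma dist_hat_le_eta:
  assumes "length p = length q" "\<forall>k<j. p ! k = q ! k"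
  shows "dist_hat p q \<le> 120 * eta j"
proof (cases "p = q")
  case True
  thus ?thesis using eta_pos[of j] by (simp add: dist_hat_def)
next
  case False
  then obtain i where i: "i < length p" "p ! i \<noteq> q ! i" using assms(1) by (metis nth_equalityI)
  define l where "l = (LEAST l. p ! Suc l \<noteq> q ! Suc l)"
  have dist: "dist_hat p q = arc_weight l" using False unfolding dist_hat_def l_def by (simp add: Let_def)
  show ?thesis
  proof (cases j)
    case 0
    have "arc_weight l \<le> 10 * eta 0" by (simp add: arc_weight_eq eta_antimono)
    thus ?thesis using 0 dist eta_pos[of 0] by simp
  next
    case (Suc j')
    have "i \<noteq> 0"
    proof
      assume "i = 0"
      thus False using assms(2)[rule_format, of 0] i(2) Suc by simp
    qed
    then obtain i' where "i = Suc i'" using not0_implies_Suc by blast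
    hence "p ! Suc i' \<noteq> q ! Suc i'" using i(2) by simp
    hence differ: "p ! Suc l \<noteq> q ! Suc l" unfolding l_def by (rule LeastI)
    have "j' \<le> l"
    proof (rule ccontr)
      assume "\<not> j' \<le> l"
      hence "Suc l < j" using Suc by simp
      thus False using assms(2) differ by blast
    qed
    hence "arc_weight l \<le> 10 * eta j'" by (simp add: arc_weight_eq eta_antimono)
    also have "\<dots> = 120 * eta j" using Suc by (simp add: eta_Suc)
    finally show ?thesis using dist by simp
  qed
qed

lemma card_scales_between:
  assumes "\<delta> > 0"
  shows "card {k\<in>{..K}. \<delta> < eta k \<and> eta k \<le> 12 ^ l * \<delta>} \<le> l"
proof -
  define S where "S = {k\<in>{..K}. \<delta> < eta k \<and> eta k \<le> 12 ^ l * \<delta>}"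
  have "card S \<le> l"
  proof (cases "S = {}")
    case False
    have "finite S" unfolding S_def by simp
    define k0 where "k0 = Min S"
    have k0: "k0 \<in> S" "\<forall>k\<in>S. k0 \<le> k"
      using Min_in[OF \<open>finite S\<close> False] Min_le[OF \<open>finite S\<close>] unfolding k0_def by auto
    have "S \<subseteq> {k0..<k0 + l}"
    proof
      fix k assume k: "k \<in> S"
      have "k < k0 + l"
      proof (rule ccontr)
        assume "\<not> k < k0 + l"
        hence "eta k \<le> eta k0 / 12 ^ l" using eta_antimono[of "k0 + l" k] by (simp add: eta_add)
        also have "\<dots> \<le> \<delta>" using k0(1) unfolding S_def by (auto simp: field_simps)
        finally show False using k unfolding S_def by simp
      qed
      thus "k \<in> {k0..<k0 + l}" using k k0(2) by simp
    qed
    hence "card S \<le> card {k0..<k0 + l}" by (intro card_mono) auto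
    thus ?thesis by simp
  qed simp
  thus ?thesis unfolding S_def .
qed

lemma sum_scales_below:
  assumes "\<delta> \<ge> 0"
  shows "(\<Sum>k\<le>K. if eta k \<le> \<delta> then eta k else 0) \<le> 12/11 * \<delta>"
proof (cases "\<exists>k. eta k \<le> \<delta>")
  case True
  define k0 where "k0 = (LEAST k. eta k \<le> \<delta>)"
  have k0: "eta k0 \<le> \<delta>" using True unfolding k0_def by (metis LeastI)
  have "(\<Sum>k\<le>K. if eta k \<le> \<delta> then eta k else 0) \<le> (\<Sum>k\<le>K. if k0 \<le> k then eta k else 0)"
    unfolding k0_def using eta_pos by (intro sum_mono) (auto intro: Least_le less_imp_le)
  also have "\<dots> = (\<Sum>k=k0..K. (1/12::real) ^ k)"
    by (simp add: sum.inter_filter[symmetric] eta_eq_power atLeastAtMost_def atMost_def Int_def conj_commute)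
  also have "\<dots> \<le> 12/11 * eta k0"
  proof (cases "k0 \<le> K")
    case True
    hence "(\<Sum>k=k0..K. (1/12::real) ^ k) = ((1/12) ^ k0 - (1/12) ^ Suc K) / (1 - 1/12)"
      by (subst sum_gp) auto
    also have "\<dots> \<le> (1/12) ^ k0 / (1 - 1/12)" by (intro divide_right_mono) auto
    finally show ?thesis by (simp add: eta_eq_power)
  qed (use eta_pos[of k0] in simp)
  also have "\<dots> \<le> 12/11 * \<delta>" using k0 by simp
  finally show ?thesis .
qed (use assms in simp)

lemma power_12_ge_linear:
  fixes N :: real
  assumes "N \<ge> 2"
  obtains l where "4 * N \<le> 12 ^ l" "real l \<le> ln N / ln 2 + 3"
proof
  define e where "e = nat \<lceil>log 2 N\<rceil>"
  have log_nonneg: "log 2 N \<ge> 0" using assms by simp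
  have "N = 2 powr (log 2 N)" using assms by simp
  also have "\<dots> \<le> 2 powr e" unfolding e_def using log_nonneg by (intro powr_mono) linarith+
  also have "\<dots> = 2 ^ e" by (simp add: powr_realpow)
  finally have "4 * N \<le> 2 ^ (e + 2)" by (simp add: power_add)
  also have "\<dots> \<le> 12 ^ (e + 2)" by (intro power_mono) auto
  finally show "4 * N \<le> 12 ^ (e + 2)" .
  have "real e \<le> log 2 N + 1" unfolding e_def using log_nonneg by linarith
  thus "real (e + 2) \<le> ln N / ln 2 + 3" by (simp add: log_def)
qed

lemma step_charge_eta_le:
  assumes "4 * N \<le> 12 ^ l" "N > 0" "\<delta> > 0"
  shows "step_charge (eta k) N \<delta> \<le>
    (if \<delta> < eta k \<and> eta k \<le> 12 ^ l * \<delta> then \<delta> else 0) + (if eta k \<le> \<delta> then eta k else 0)"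
proof -
  have "eta k \<le> 12 ^ l * \<delta>" if "eta k / (4 * N) \<le> \<delta>"
  proof -
    have "eta k \<le> 4 * N * \<delta>" using that assms(2) by (auto simp: field_simps)
    also have "\<dots> \<le> 12 ^ l * \<delta>" using assms(1,3) by (intro mult_right_mono) auto
    finally show ?thesis .
  qed
  thus ?thesis using eta_pos[of k] assms(3) unfolding step_charge_def by auto
qed

lemma sum_step_charges_le_log:
  assumes N: "N \<ge> 2" and "\<delta> \<ge> 0"
  shows "(\<Sum>k\<le>K. step_charge (eta k) N \<delta>) \<le> 11 * ln N * \<delta>"
proof (cases "\<delta> = 0")
  case True
  have "\<not> eta k / (4 * N) \<le> 0" for k using eta_pos[of k] N by (simp add: not_le)
  thus ?thesis using True by (simp add: step_charge_def)
next
  case False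
  hence \<delta>: "\<delta> > 0" using assms(2) by simp
  obtain l where l: "4 * N \<le> 12 ^ l" "real l \<le> ln N / ln 2 + 3"
    using power_12_ge_linear[OF N] .
  let ?S = "{k\<in>{..K}. \<delta> < eta k \<and> eta k \<le> 12 ^ l * \<delta>}"
  have "(\<Sum>k\<le>K. step_charge (eta k) N \<delta>) \<le>
      (\<Sum>k\<le>K. if \<delta> < eta k \<and> eta k \<le> 12 ^ l * \<delta> then \<delta> else 0)
      + (\<Sum>k\<le>K. if eta k \<le> \<delta> then eta k else 0)"
    unfolding sum.distrib[symmetric] using step_charge_eta_le[OF l(1) _ \<delta>] N
    by (intro sum_mono) simp
  also have "(\<Sum>k\<le>K. if \<delta> < eta k \<and> eta k \<le> 12 ^ l * \<delta> then \<delta> else 0) = real (card ?S) * \<delta>"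
    by (simp add: sum.inter_filter[symmetric])
  also have "\<dots> \<le> (ln N / ln 2 + 3) * \<delta>"
    using card_scales_between[OF \<delta>, of K l] l(2) \<delta> by (intro mult_right_mono) auto
  also have "(\<Sum>k\<le>K. if eta k \<le> \<delta> then eta k else 0) \<le> 12/11 * \<delta>"
    using sum_scales_below \<delta> by simp
  also have "(ln N / ln 2 + 3) * \<delta> + 12/11 * \<delta> \<le> 11 * ln N * \<delta>"
  proof -
    have ln2: "ln 2 \<ge> (1/2::real)" using ln_add1_ge[of 1] by simp
    have "ln N \<ge> ln 2" using N by simp
    hence "ln N / ln 2 \<le> 2 * ln N" "ln N \<ge> 1/2" using ln2 by (simp_all add: divide_le_eq)
    hence "ln N / ln 2 + 3 + 12/11 \<le> 11 * ln N" by linarith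
    hence "(ln N / ln 2 + 3 + 12/11) * \<delta> \<le> 11 * ln N * \<delta>" using \<delta> by (intro mult_right_mono) auto
    thus ?thesis by (simp add: algebra_simps)
  qed
  finally show ?thesis by simp
qed

section \<open>Greedy nets at all scales\<close>

lemma greedy_run_subset: "greedy_run X d r xs \<Longrightarrow> set xs \<subseteq> X"
  unfolding greedy_run_def Let_def by (auto simp: in_set_conv_nth)

lemma greedy_run_covers:
  assumes run: "greedy_run X d r xs" and w: "w \<in> X"
  shows "\<exists>u\<in>set xs. d w u \<le> r \<and> card (ball1 X d w (r/3)) \<le> card (ball1 X d u (r/3))"
proof -
  have "w \<notin> X - ballS X d (set xs) r" using run unfolding greedy_run_def by blast
  then obtain j0 where j0: "j0 < length xs" "d w (xs ! j0) \<le> r"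
    using w unfolding ballS_def by (auto simp: in_set_conv_nth)
  define j where "j = (LEAST j. j < length xs \<and> d w (xs ! j) \<le> r)"
  have j: "j < length xs" "d w (xs ! j) \<le> r"
    using LeastI[of "\<lambda>j. j < length xs \<and> d w (xs ! j) \<le> r", OF conjI[OF j0]]
    unfolding j_def by auto
  have "\<not> d w (xs ! i) \<le> r" if "i < j" for i
    using not_less_Least[of i "\<lambda>j. j < length xs \<and> d w (xs ! j) \<le> r"] that j
    unfolding j_def by auto
  \<comment> \<open>\<open>w\<close> is still uncovered when \<open>xs ! j\<close> is chosen, so the greedy choice beats \<open>w\<close>.\<close>
  hence "w \<in> X - ballS X d (set (take j xs)) r"
    using w unfolding ballS_def by (auto simp: in_set_conv_nth)
  hence "card (ball1 X d w (r / 3)) \<le> card (ball1 X d (xs ! j) (r / 3))"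
    using run j(1) unfolding greedy_run_def Let_def by blast
  thus ?thesis using j by (intro bexI[of _ "xs ! j"]) auto
qed

locale net_hierarchy = finite_metric X d
  for X :: "'a set" and d :: "'a \<Rightarrow> 'a \<Rightarrow> real" +
  fixes U :: "nat \<Rightarrow> 'a set"
  assumes two_points: "card X \<ge> 2" and nets: "nets_ok X d U"
begin

abbreviation K :: nat where "K \<equiv> Klev X d"

lemma finite_distances: "finite {d x y | x y. x \<in> X \<and> y \<in> X \<and> x \<noteq> y}"
proof -
  have "{d x y | x y. x \<in> X \<and> y \<in> X \<and> x \<noteq> y} \<subseteq> (\<lambda>(x, y). d x y) ` (X \<times> X)" by auto
  thus ?thesis using finite_X finite_subset by blast
qed

lemma eps0_pos: "eps0 X d > 0"
proof -
  obtain B where "B \<subseteq> X" "card B = 2" using obtain_subset_with_card_n[OF two_points] by metis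
  then obtain x y where "x \<in> X" "y \<in> X" "x \<noteq> y" by (metis card_2_iff insertCI subset_iff)
  hence "{d x y | x y. x \<in> X \<and> y \<in> X \<and> x \<noteq> y} \<noteq> {}" by blast
  hence "eps0 X d \<in> {d x y | x y. x \<in> X \<and> y \<in> X \<and> x \<noteq> y}"
    unfolding eps0_def using finite_distances by (rule Min_in[rotated])
  thus ?thesis using d_pos by auto
qed

lemma eps0_le: "x \<in> X \<Longrightarrow> y \<in> X \<Longrightarrow> x \<noteq> y \<Longrightarrow> eps0 X d \<le> d x y"
  unfolding eps0_def using finite_distances by (intro Min_le) auto

lemma eta_K_le: "eta K \<le> eps0 X d / 12"
proof -
  let ?t = "log 12 (1 / eps0 X d)"
  have "1 / eps0 X d = 12 powr ?t" using eps0_pos by simp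
  also have "\<dots> \<le> 12 powr real (nat \<lceil>?t\<rceil>)" by (intro powr_mono) linarith+
  also have "\<dots> = 12 ^ nat \<lceil>?t\<rceil>" by (simp add: powr_realpow)
  finally have "1 / 12 ^ nat \<lceil>?t\<rceil> \<le> eps0 X d"
    using eps0_pos by (simp add: divide_le_eq mult.commute)
  moreover have "eta K = eta 1 / 12 ^ nat \<lceil>?t\<rceil>"
    unfolding Klev_def tau_def by (rule eta_add)
  ultimately show ?thesis by (simp add: eta_def tau_def)
qed

lemma eq_if_d_le_eta_K: "x \<in> X \<Longrightarrow> y \<in> X \<Longrightarrow> d x y \<le> 3 * eta K \<Longrightarrow> x = y"
  using eps0_le eta_K_le eps0_pos by fastforce

definition ball_count :: "nat \<Rightarrow> 'a \<Rightarrow> nat" where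
  "ball_count k v = card (ball1 X d v (eta k / 3))"

lemma net_subset: "k \<le> K \<Longrightarrow> U k \<subseteq> X"
  using nets greedy_run_subset unfolding nets_ok_def greedy_net_def by blast

lemma net_covers:
  assumes "k \<le> K" "w \<in> X"
  shows "\<exists>u\<in>U k. d w u \<le> eta k \<and> ball_count k w \<le> ball_count k u"
proof -
  obtain xs where "greedy_run X d (1 / tau ^ k) xs" "U k = set xs"
    using nets assms(1) unfolding nets_ok_def greedy_net_def by blast
  thus ?thesis using greedy_run_covers assms(2) by (fastforce simp: ball_count_def eta_def)
qed

text \<open>The radius \<open>5/4 \<cdot> \<tau>\<^sup>-\<^sup>k\<close> is large enough to contain the ball \<open>B(u', 6\<tau>\<^sup>-\<^sup>(\<^sup>k\<^sup>+\<^sup>1\<^sup>))\<close> of the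
  arc condition whenever \<open>u'\<close> is the net point chosen at the next level near a point close to \<open>z\<close>.\<close>
definition net_point :: "nat \<Rightarrow> 'a \<Rightarrow> 'a" where
  "net_point k z = (SOME u. u \<in> U k \<and> d u z \<le> 9/4 * eta k \<and>
     (\<forall>w\<in>X. d w z \<le> 5/4 * eta k \<longrightarrow> ball_count k w \<le> ball_count k u))"

lemma net_point:
  assumes "k \<le> K" "z \<in> X"
  shows "net_point k z \<in> U k" "d (net_point k z) z \<le> 9/4 * eta k"
    "\<And>w. w \<in> X \<Longrightarrow> d w z \<le> 5/4 * eta k \<Longrightarrow> ball_count k w \<le> ball_count k (net_point k z)"
proof -
  define W where "W = {w \<in> X. d w z \<le> 5/4 * eta k}"
  have "finite W" using finite_X unfolding W_def by simp
  moreover have "z \<in> W" using assms d_self eta_pos[of k] unfolding W_def by simp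
  ultimately obtain w0 where "w0 \<in> W" "Max (ball_count k ` W) = ball_count k w0"
    by (metis obtains_MAX empty_iff)
  hence w0: "w0 \<in> W" "\<forall>w\<in>W. ball_count k w \<le> ball_count k w0"
    using \<open>finite W\<close> by (metis Max_ge finite_imageI imageI)+
  obtain u where u: "u \<in> U k" "d w0 u \<le> eta k" "ball_count k w0 \<le> ball_count k u"
    using net_covers assms(1) w0(1) unfolding W_def by blast
  have "u \<in> X" "w0 \<in> X" using net_subset assms(1) u(1) w0(1) unfolding W_def by auto
  hence "d u z \<le> d u w0 + d w0 z" using d_triangle assms(2) by blast
  also have "\<dots> \<le> 9/4 * eta k" using u(2) d_sym[OF \<open>u \<in> X\<close> \<open>w0 \<in> X\<close>] w0(1) W_def by auto
  finally have "\<exists>u. u \<in> U k \<and> d u z \<le> 9/4 * eta k \<and>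
      (\<forall>w\<in>X. d w z \<le> 5/4 * eta k \<longrightarrow> ball_count k w \<le> ball_count k u)"
    using u w0(2) unfolding W_def by (blast intro: le_trans)
  from someI_ex[OF this] show "net_point k z \<in> U k" "d (net_point k z) z \<le> 9/4 * eta k"
    "\<And>w. w \<in> X \<Longrightarrow> d w z \<le> 5/4 * eta k \<Longrightarrow> ball_count k w \<le> ball_count k (net_point k z)"
    unfolding net_point_def by blast+
qed

lemma net_point_in_X: "k \<le> K \<Longrightarrow> z \<in> X \<Longrightarrow> net_point k z \<in> X"
  using net_point(1) net_subset by blast

lemma net_point_K: "z \<in> X \<Longrightarrow> net_point K z = z"
  using net_point(2)[of K z] eta_pos[of K] net_point_in_X eq_if_d_le_eta_K by force

lemma arcA_net_point:
  assumes "k < K" "z \<in> X" "z' \<in> X" "x \<in> X" "d x z \<le> eta k / 2" "d x z' \<le> eta (Suc k) / 2"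
  shows "arcA X d U k (net_point k z) (net_point (Suc k) z')"
proof -
  let ?u = "net_point k z" and ?v = "net_point (Suc k) z'"
  have uX: "?u \<in> X" and vX: "?v \<in> X" using net_point_in_X assms by auto
  have v_near: "d ?v z' \<le> 3/16 * eta k" using net_point(2)[of "Suc k" z'] assms by (simp add: eta_Suc)
  have "d z z' \<le> d z x + d x z'" using d_triangle assms(2-4) by blast
  hence zz': "d z z' \<le> 13/24 * eta k" using assms(5,6) d_sym[OF assms(2,4)] by (simp add: eta_Suc)
  have "d ?u ?v \<le> d ?u z + d z z' + d z' ?v"
    using d_triangle[OF uX assms(2) vX] d_triangle[OF assms(2,3) vX] by simp
  also have "\<dots> \<le> 4 * eta k"
    using net_point(2)[of k z] assms v_near zz' d_sym[OF vX assms(3)] eta_pos[of k] by simp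
  finally have close: "d ?u ?v \<le> 4 / tau ^ k" by (simp add: eta_def)
  have "card (ball1 X d w (1 / tau ^ k / 3)) \<le> card (ball1 X d ?u (1 / tau ^ k / 3))"
    if w: "w \<in> ball1 X d ?v (6 / tau ^ Suc k)" for w
  proof -
    have wX: "w \<in> X" and "d w ?v \<le> 1/2 * eta k"
      using w by (auto simp: ball1_def ballS_def eta_def tau_def)
    moreover have "d w z \<le> d w ?v + d ?v z' + d z' z"
      using d_triangle[OF wX vX assms(2)] d_triangle[OF vX assms(3,2)] by simp
    ultimately have "d w z \<le> 5/4 * eta k"
      using v_near zz' d_sym[OF assms(2,3)] eta_pos[of k] by linarith
    thus ?thesis using net_point(3)[of k z w] assms wX by (simp add: ball_count_def eta_def)
  qed
  thus ?thesis unfolding arcA_def using net_point(1)[of k z] net_point(1)[of "Suc k" z'] assms close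
    by simp
qed

end

section \<open>Paths along a sequence of points\<close>

text \<open>Sequences are indexed from 1; the value at 0 only seeds the recursion.\<close>
primrec block_start :: "('a \<Rightarrow> 'a \<Rightarrow> real) \<Rightarrow> (nat \<Rightarrow> 'a) \<Rightarrow> real \<Rightarrow> nat \<Rightarrow> nat" where
  "block_start d x r 0 = 1"
| "block_start d x r (Suc i) =
     (if d (x (Suc i)) (x (block_start d x r i)) \<le> r then block_start d x r i else Suc i)"

locale point_sequence = net_hierarchy +
  fixes m :: nat and x :: "nat \<Rightarrow> 'a"
  assumes m_pos: "m \<ge> 1" and x_in_X: "i \<in> {1..m} \<Longrightarrow> x i \<in> X"
begin

definition block :: "nat \<Rightarrow> nat \<Rightarrow> nat" where
  "block k i = block_start d x (eta k / 2) i"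

definition new_block :: "nat \<Rightarrow> nat \<Rightarrow> bool" where
  "new_block k i \<longleftrightarrow> eta k / 2 < d (x (Suc i)) (x (block k i))"

definition gamma :: "nat \<Rightarrow> 'a list" where
  "gamma i = map (\<lambda>k. net_point k (x (block k i))) [0..<Suc K]"

definition charge :: "nat \<Rightarrow> nat \<Rightarrow> real" where
  "charge k t = step_charge (eta k) (card X) (d (x t) (x (Suc t)))"

lemma index_range: "{1..m-1} = {1..<m}"
  using m_pos by auto

lemma block_Suc: "block k (Suc i) = (if new_block k i then Suc i else block k i)"
  by (simp add: block_def new_block_def not_le)

lemma block_bounds: "1 \<le> block k i \<and> block k i \<le> max i 1"
  by (induction i) (auto simp: block_Suc block_def)

lemma block_close: "i \<in> {1..m} \<Longrightarrow> d (x i) (x (block k i)) \<le> eta k / 2"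
  using x_in_X d_self eta_pos[of k]
  by (cases i) (auto simp: block_Suc new_block_def less_imp_le)

lemma block_in_X: "i \<in> {1..m} \<Longrightarrow> x (block k i) \<in> X"
  using block_bounds[of k i] x_in_X by auto

lemma length_gamma: "length (gamma i) = Suc K"
  by (simp add: gamma_def)

lemma nth_gamma: "k \<le> K \<Longrightarrow> gamma i ! k = net_point k (x (block k i))"
  unfolding gamma_def by (simp del: upt_Suc)

lemma dpath_gamma:
  assumes "i \<in> {1..m}"
  shows "dpath X d U (gamma i)"
  unfolding dpath_def
proof (intro conjI allI impI)
  show "length (gamma i) = Suc K" by (rule length_gamma)
  show "gamma i ! 0 \<in> U 0" using net_point(1)[of 0] block_in_X[OF assms] by (simp add: nth_gamma)
  fix k assume "k < K"
  thus "arcA X d U k (gamma i ! k) (gamma i ! Suc k)"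
    using arcA_net_point[OF \<open>k < K\<close> block_in_X[OF assms] block_in_X[OF assms] x_in_X[OF assms]
        block_close[OF assms] block_close[OF assms]]
    by (simp add: nth_gamma)
qed

lemma last_gamma:
  assumes "i \<in> {1..m}"
  shows "last (gamma i) = x i"
proof -
  have "d (x i) (x (block K i)) \<le> 3 * eta K" using block_close[OF assms, of K] eta_pos[of K] by simp
  hence "x (block K i) = x i" using eq_if_d_le_eta_K block_in_X x_in_X assms by (metis d_sym)
  moreover have "last (gamma i) = gamma i ! K"
    using length_gamma[of i] by (metis diff_Suc_1 last_conv_nth list.size(3) nat.distinct(1))
  ultimately show ?thesis using net_point_K x_in_X assms by (simp add: nth_gamma)
qed

lemma dist_hat_gamma_le:
  "dist_hat (gamma i) (gamma (Suc i)) \<le> 120 * (\<Sum>k\<le>K. if new_block k i then eta k else 0)"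
proof (cases "\<exists>k\<le>K. new_block k i")
  case False
  hence "gamma i = gamma (Suc i)"
    by (intro nth_equalityI) (auto simp: length_gamma nth_gamma block_Suc)
  thus ?thesis using eta_pos by (simp add: dist_hat_def sum_nonneg less_imp_le)
next
  case True
  define j where "j = (LEAST k. new_block k i)"
  have j: "new_block j i" "j \<le> K"
    using True unfolding j_def by (metis LeastI, metis Least_le le_trans)
  have "\<forall>k<j. gamma i ! k = gamma (Suc i) ! k"
    using not_less_Least[of _ "\<lambda>k. new_block k i"] j(2) unfolding j_def[symmetric]
    by (auto simp: nth_gamma block_Suc)
  hence "dist_hat (gamma i) (gamma (Suc i)) \<le> 120 * eta j"
    by (intro dist_hat_le_eta) (simp_all add: length_gamma)
  also have "eta j \<le> (\<Sum>k\<le>K. if new_block k i then eta k else 0)"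
  proof -
    have "(if new_block j i then eta j else 0) \<le> (\<Sum>k\<le>K. if new_block k i then eta k else 0)"
      using j(2) eta_pos by (intro member_le_sum) (auto simp: less_imp_le)
    thus ?thesis using j(1) by simp
  qed
  finally show ?thesis by simp
qed

lemma charge_nonneg: "charge k t \<ge> 0"
  using two_points eta_pos[of k] by (simp add: charge_def step_charge_nonneg less_imp_le)

lemma new_block_le_charges:
  assumes "i \<in> {1..<m}" "new_block k i"
  shows "eta k \<le> 4 * (\<Sum>t\<in>{block k i..<Suc i}. charge k t)"
  unfolding charge_def
proof (rule displacement_le_step_charges)
  show "\<forall>t\<in>{block k i..Suc i}. x t \<in> X" using block_bounds[of k i] assms(1) x_in_X by auto
  show "eta k / 2 < d (x (block k i)) (x (Suc i))"
    using assms block_in_X x_in_X d_sym by (simp add: new_block_def)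
qed (use eta_pos block_bounds[of k i] assms(1) in auto)

text \<open>Amortisation invariant: each new block is paid for by the charges of the steps of the block
  it closes.\<close>
lemma sum_new_block_le_charges:
  "i \<in> {1..m} \<Longrightarrow>
     (\<Sum>t\<in>{1..<i}. if new_block k t then eta k else 0) \<le> 4 * (\<Sum>t\<in>{1..<block k i}. charge k t)"
proof (induction i)
  case (Suc i)
  show ?case
  proof (cases "i = 0")
    case False
    hence IH: "(\<Sum>t\<in>{1..<i}. if new_block k t then eta k else 0) \<le> 4 * (\<Sum>t\<in>{1..<block k i}. charge k t)"
      using Suc by simp
    show ?thesis
    proof (cases "new_block k i")
      case True
      have "(\<Sum>t\<in>{1..<block k i}. charge k t) + (\<Sum>t\<in>{block k i..<Suc i}. charge k t)
          = (\<Sum>t\<in>{1..<Suc i}. charge k t)"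
        using block_bounds[of k i] False by (intro sum.atLeastLessThan_concat) auto
      moreover have "eta k \<le> 4 * (\<Sum>t\<in>{block k i..<Suc i}. charge k t)"
        using new_block_le_charges True False Suc.prems by simp
      ultimately show ?thesis using IH True False by (simp add: block_Suc)
    qed (use IH False in \<open>simp add: block_Suc\<close>)
  qed (simp add: block_def)
qed simp

lemma sum_dist_hat_gamma_le:
  "(\<Sum>i=1..m-1. dist_hat (gamma i) (gamma (Suc i))) \<le> 480 * (\<Sum>t\<in>{1..<m}. \<Sum>k\<le>K. charge k t)"
proof -
  have "(\<Sum>i=1..m-1. dist_hat (gamma i) (gamma (Suc i))) \<le>
        (\<Sum>i\<in>{1..<m}. 120 * (\<Sum>k\<le>K. if new_block k i then eta k else 0))"
    unfolding index_range by (intro sum_mono dist_hat_gamma_le)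
  also have "\<dots> = 120 * (\<Sum>k\<le>K. \<Sum>i\<in>{1..<m}. if new_block k i then eta k else 0)"
    by (simp add: sum_distrib_left[symmetric] sum.swap[of _ "{..K}"])
  also have "\<dots> \<le> 120 * (\<Sum>k\<le>K. 4 * (\<Sum>t\<in>{1..<m}. charge k t))"
  proof -
    have "(\<Sum>i\<in>{1..<m}. if new_block k i then eta k else 0) \<le> 4 * (\<Sum>t\<in>{1..<m}. charge k t)" for k
    proof -
      have "(\<Sum>t\<in>{1..<block k m}. charge k t) \<le> (\<Sum>t\<in>{1..<m}. charge k t)"
        using block_bounds[of k m] m_pos charge_nonneg by (intro sum_mono2) auto
      thus ?thesis using sum_new_block_le_charges[of m k] m_pos by simp
    qed
    thus ?thesis by (intro mult_left_mono sum_mono) auto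
  qed
  also have "\<dots> = 480 * (\<Sum>t\<in>{1..<m}. \<Sum>k\<le>K. charge k t)"
    by (simp add: sum_distrib_left[symmetric] sum.swap[of _ "{..K}"])
  finally show ?thesis .
qed

lemma sum_dist_hat_gamma_le_log:
  "(\<Sum>i=1..m-1. dist_hat (gamma i) (gamma (Suc i)))
     \<le> 5280 * ln (real (card X)) * (\<Sum>i=1..m-1. d (x i) (x (Suc i)))"
proof -
  have "(\<Sum>k\<le>K. charge k t) \<le> 11 * ln (card X) * d (x t) (x (Suc t))" if "t \<in> {1..<m}" for t
    unfolding charge_def using two_points that x_in_X d_nonneg
    by (intro sum_step_charges_le_log) auto
  hence "(\<Sum>t\<in>{1..<m}. \<Sum>k\<le>K. charge k t) \<le> (\<Sum>t\<in>{1..<m}. 11 * ln (card X) * d (x t) (x (Suc t)))"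
    by (intro sum_mono)
  also have "\<dots> = 11 * ln (card X) * (\<Sum>i=1..m-1. d (x i) (x (Suc i)))"
    unfolding index_range by (simp add: sum_distrib_left)
  finally show ?thesis using sum_dist_hat_gamma_le by simp
qed

end

theorem corollary3p10:
  shows "\<exists>C::real. \<forall>(X::'a set) d U.
     fin_metric X d \<and> card X \<ge> 2 \<and> diam X d = 1 \<and> nets_ok X d U \<longrightarrow>
     (\<forall>m::nat. \<forall>x::nat \<Rightarrow> 'a. m \<ge> 1 \<and> (\<forall>i\<in>{1..m}. x i \<in> X) \<longrightarrow>
        (\<exists>\<gamma>::nat \<Rightarrow> 'a list.
           (\<forall>i\<in>{1..m}. dpath X d U (\<gamma> i) \<and> last (\<gamma> i) = x i) \<and>
           (\<Sum>i=1..m-1. dist_hat (\<gamma> i) (\<gamma> (Suc i)))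
             \<le> C * ln (real (card X)) * (\<Sum>i=1..m-1. d (x i) (x (Suc i)))))"
proof (intro exI[of _ 5280] allI impI)
  fix X :: "'a set" and d U m and x :: "nat \<Rightarrow> 'a"
  assume "fin_metric X d \<and> card X \<ge> 2 \<and> diam X d = 1 \<and> nets_ok X d U"
    and "m \<ge> 1 \<and> (\<forall>i\<in>{1..m}. x i \<in> X)"
  then interpret point_sequence X d U m x
    by unfold_locales auto
  show "\<exists>\<gamma>. (\<forall>i\<in>{1..m}. dpath X d U (\<gamma> i) \<and> last (\<gamma> i) = x i) \<and>
      (\<Sum>i=1..m-1. dist_hat (\<gamma> i) (\<gamma> (Suc i)))
        \<le> 5280 * ln (real (card X)) * (\<Sum>i=1..m-1. d (x i) (x (Suc i)))"
    using dpath_gamma last_gamma sum_dist_hat_gamma_le_log by blast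
qed

end
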